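(* Let $n\ge 1$, $s\in(0,1)$, let $a$ be a spectral measure on $\mathbb S^{n-1}$ (as in the context), let $\Omega\subset\mathbb R^n$ be open and let $u\in L^\infty(\mathbb R^n)$ be continuous in $\overline\Omega$. Then $u$ satisfies the asymptotic expansion $$u(x)=\mathscr M^s_r u(x)+\mathcal O(r^2)\qquad\text{as } r\to0$$ for all $x\in\Omega$ in the viscosity sense if and only if $\mathcal L u=0$ in $\Omega$ in the viscosity sense.
   Context: A spectral measure is a non-negative finite Borel measure $a$ on the unit sphere $\mathbb S^{n-1}\subset\mathbb R^n$ with $0<\int_{\mathbb S^{n-1}}da\le\Lambda$ for some $\Lambda>0$. For $u:\mathbb R^n\to\mathbb R$ set $\delta(u,x,y)=2u(x)-u(x-y)-u(x+y)$ and $$\mathcal L u(x)=\int_0^\infty d\rho\int_{\mathbb S^{n-1}}da(\omega)\,\frac{\delta(u,x,\rho\omega)}{\rho^{1+2s}},$$ $$\mathscr M^s_r u(x)=c(n,s,a)\,r^{2s}\int_r^\infty d\rho\int_{\mathbb S^{n-1}}da(\omega)\,\frac{u(x+\rho\omega)+u(x-\rho\omega)}{(\rho^2-r^2)^s\rho},\qquad c(n,s,a)=\frac{\sin\pi s}{\pi}\Big(\int_{\mathbb S^{n-1}}da\Big)^{-1}.$$ Touching functions: for $x\in\Omega$, a neighborhood $U\subset\Omega$ of $x$ and $\varphi\in C^2(\overline U)$, let $v=\varphi$ in $U$ and $v=u$ in $\mathbb R^n\setminus U$. Viscosity solution: $u\in L^\infty(\mathbb R^n)$ lower (resp. upper)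 semicontinuous in $\overline\Omega$ is a viscosity supersolution (resp. subsolution) of $\mathcal Lu=0$ if for every $x\in\Omega$, every neighborhood $U\subset\Omega$ of $x$ and every $\varphi\in C^2(\overline U)$ with $\varphi(x)=u(x)$ and $\varphi(y)<u(y)$ (resp. $\varphi(y)>u(y)$) for $y\in U\setminus\{x\}$, the function $v$ above satisfies $\mathcal Lv(x)\ge0$ (resp. $\le0$). A viscosity solution is a continuous function that is both. Mean value in viscosity sense: $u$ (lower, resp. upper, semicontinuous in $\overline\Omega$, bounded) satisfies $u(x)=\mathscr M_r^s u(x)+\mathcal O(r^2)$ in the viscosity sense at $x$ from above/below if for every neighborhood $U\subset\Omega$ of $x$ and every $\varphi\in C^2(\overline U)$ with $\varphi(x)=u(x)$ and $\varphi<u$ (resp. $\varphi>u$) on $U\setminus\{x\}$, the function $v$ above satisfies $v(x)\ge \mathscr M_r^s v(x)+\mathcal O(r^2)$ (resp. $v(x)\le\mathscr M^s_r v(x)+\mathcal O(r^2)$) as $r\to0$; the expansion holds in the viscosity sense if both requirements hold. *)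

theory Defs
  imports "HOL-Analysis.Analysis"
begin

definition spectral_measure :: "(real^'n) measure \<Rightarrow> bool" where
  "spectral_measure a \<longleftrightarrow> finite_measure a
     \<and> sets a = sets (restrict_space borel (sphere (0::real^'n) 1))
     \<and> 0 < measure a (space a)"

definition delta :: "(real^'n \<Rightarrow> real) \<Rightarrow> real^'n \<Rightarrow> real^'n \<Rightarrow> real" where
  "delta u x y = 2 * u x - u (x - y) - u (x + y)"

definition Lop :: "(real^'n) measure \<Rightarrow> real \<Rightarrow> (real^'n \<Rightarrow> real) \<Rightarrow> real^'n \<Rightarrow> real" where
  "Lop a s u x = (LINT \<rho>:{0<..}|lborel. (LINT \<omega>|a. delta u x (\<rho> *\<^sub>R \<omega>) / \<rho> powr (1 + 2 * s)))"

definition cnst :: "(real^'n) measure \<Rightarrow> real \<Rightarrow> real" where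
  "cnst a s = sin (pi * s) / pi / measure a (space a)"

definition Mop :: "(real^'n) measure \<Rightarrow> real \<Rightarrow> real \<Rightarrow> (real^'n \<Rightarrow> real) \<Rightarrow> real^'n \<Rightarrow> real" where
  "Mop a s r u x = cnst a s * r powr (2 * s) *
     (LINT \<rho>:{r<..}|lborel. (LINT \<omega>|a.
        (u (x + \<rho> *\<^sub>R \<omega>) + u (x - \<rho> *\<^sub>R \<omega>)) / ((\<rho>\<^sup>2 - r\<^sup>2) powr s * \<rho>)))"

definition lsc_on :: "'a::topological_space set \<Rightarrow> ('a \<Rightarrow> real) \<Rightarrow> bool" where
  "lsc_on S u \<longleftrightarrow> (\<forall>y\<in>S. \<forall>t. t < u y \<longrightarrow> eventually (\<lambda>z. t < u z) (at y within S))"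

definition usc_on :: "'a::topological_space set \<Rightarrow> ('a \<Rightarrow> real) \<Rightarrow> bool" where
  "usc_on S u \<longleftrightarrow> (\<forall>y\<in>S. \<forall>t. u y < t \<longrightarrow> eventually (\<lambda>z. u z < t) (at y within S))"

definition C2_on :: "(real^'n) set \<Rightarrow> (real^'n \<Rightarrow> real) \<Rightarrow> bool" where
  "C2_on S \<phi> \<longleftrightarrow> (\<exists>D :: real^'n \<Rightarrow> ((real^'n) \<Rightarrow>\<^sub>L real).
      \<exists>D2 :: real^'n \<Rightarrow> ((real^'n) \<Rightarrow>\<^sub>L ((real^'n) \<Rightarrow>\<^sub>L real)).
      (\<forall>y\<in>S. (\<phi> has_derivative blinfun_apply (D y)) (at y within S)
            \<and> (D has_derivative blinfun_apply (D2 y)) (at y within S))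
      \<and> continuous_on S D2)"

(* bounded measurable function (u in L^infinity, taken pointwise) *)
definition Linfty :: "(real^'n \<Rightarrow> real) \<Rightarrow> bool" where
  "Linfty u \<longleftrightarrow> u \<in> borel_measurable borel \<and> bounded (range u)"

definition test_data :: "(real^'n) set \<Rightarrow> real^'n \<Rightarrow> (real^'n) set \<Rightarrow> (real^'n \<Rightarrow> real) \<Rightarrow> bool" where
  "test_data \<Omega> x U \<phi> \<longleftrightarrow> open U \<and> bounded U \<and> x \<in> U \<and> U \<subseteq> \<Omega> \<and> C2_on (closure U) \<phi>"

definition touch :: "(real^'n) set \<Rightarrow> (real^'n \<Rightarrow> real) \<Rightarrow> (real^'n \<Rightarrow> real) \<Rightarrow> real^'n \<Rightarrow> real" where
  "touch U \<phi> u = (\<lambda>y. if y \<in> U then \<phi> y else u y)"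

definition visc_super :: "(real^'n) measure \<Rightarrow> real \<Rightarrow> (real^'n) set \<Rightarrow> (real^'n \<Rightarrow> real) \<Rightarrow> bool" where
  "visc_super a s \<Omega> u \<longleftrightarrow> Linfty u \<and> lsc_on (closure \<Omega>) u \<and>
     (\<forall>x\<in>\<Omega>. \<forall>U \<phi>. test_data \<Omega> x U \<phi> \<and> \<phi> x = u x \<and> (\<forall>y\<in>U - {x}. \<phi> y < u y)
        \<longrightarrow> Lop a s (touch U \<phi> u) x \<ge> 0)"

definition visc_sub :: "(real^'n) measure \<Rightarrow> real \<Rightarrow> (real^'n) set \<Rightarrow> (real^'n \<Rightarrow> real) \<Rightarrow> bool" where
  "visc_sub a s \<Omega> u \<longleftrightarrow> Linfty u \<and> usc_on (closure \<Omega>) u \<and>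
     (\<forall>x\<in>\<Omega>. \<forall>U \<phi>. test_data \<Omega> x U \<phi> \<and> \<phi> x = u x \<and> (\<forall>y\<in>U - {x}. \<phi> y > u y)
        \<longrightarrow> Lop a s (touch U \<phi> u) x \<le> 0)"

definition visc_solution :: "(real^'n) measure \<Rightarrow> real \<Rightarrow> (real^'n) set \<Rightarrow> (real^'n \<Rightarrow> real) \<Rightarrow> bool" where
  "visc_solution a s \<Omega> u \<longleftrightarrow> continuous_on (closure \<Omega>) u \<and> visc_super a s \<Omega> u \<and> visc_sub a s \<Omega> u"

definition mv_above :: "(real^'n) measure \<Rightarrow> real \<Rightarrow> (real^'n) set \<Rightarrow> (real^'n \<Rightarrow> real) \<Rightarrow> real^'n \<Rightarrow> bool" where
  "mv_above a s \<Omega> u x \<longleftrightarrow> Linfty u \<and> lsc_on (closure \<Omega>) u \<and>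
     (\<forall>U \<phi>. test_data \<Omega> x U \<phi> \<and> \<phi> x = u x \<and> (\<forall>y\<in>U - {x}. \<phi> y < u y)
        \<longrightarrow> (\<exists>C. eventually (\<lambda>r. touch U \<phi> u x \<ge> Mop a s r (touch U \<phi> u) x - C * r\<^sup>2) (at_right 0)))"

definition mv_below :: "(real^'n) measure \<Rightarrow> real \<Rightarrow> (real^'n) set \<Rightarrow> (real^'n \<Rightarrow> real) \<Rightarrow> real^'n \<Rightarrow> bool" where
  "mv_below a s \<Omega> u x \<longleftrightarrow> Linfty u \<and> usc_on (closure \<Omega>) u \<and>
     (\<forall>U \<phi>. test_data \<Omega> x U \<phi> \<and> \<phi> x = u x \<and> (\<forall>y\<in>U - {x}. \<phi> y > u y)
        \<longrightarrow> (\<exists>C. eventually (\<lambda>r. touch U \<phi> u x \<le> Mop a s r (touch U \<phi> u) x + C * r\<^sup>2) (at_right 0)))"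

definition mv_viscosity :: "(real^'n) measure \<Rightarrow> real \<Rightarrow> (real^'n) set \<Rightarrow> (real^'n \<Rightarrow> real) \<Rightarrow> real^'n \<Rightarrow> bool" where
  "mv_viscosity a s \<Omega> u x \<longleftrightarrow> mv_above a s \<Omega> u x \<and> mv_below a s \<Omega> u x"

end

theory Submission
  imports Defs "HOL-Real_Asymp.Real_Asymp"
begin

text \<open>For a bounded \<open>v\<close> whose second difference \<open>\<delta>(v, x, y)\<close> is \<open>O(|y|\<^sup>2)\<close> (in particular for
  every touching function) one has \<open>v(x) - \<M>\<^sub>r v(x) = c r\<^sup>2\<^sup>s \<L>v(x) + O(r\<^sup>2)\<close>. Both operators are
  radial integrals of the spherical average of \<open>\<delta>\<close>: the normalisation \<open>\<M>\<^sub>r 1 = 1\<close> turns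
  \<open>v(x) - \<M>\<^sub>r v(x)\<close> into \<open>c r\<^sup>2\<^sup>s\<close> times the integral of that average against the kernel of \<open>\<M>\<^sub>r\<close>, and this
  kernel differs from \<open>\<rho>\<^sup>-\<^sup>1\<^sup>-\<^sup>2\<^sup>s\<close> by an amount whose second moment is \<open>O(r\<^sup>2\<^sup>-\<^sup>2\<^sup>s)\<close>. Since
  \<open>r\<^sup>2 = o(r\<^sup>2\<^sup>s)\<close>, each one-sided mean value inequality for a test function is then equivalent to
  the corresponding sign of \<open>\<L>\<close> applied to the same touching function.\<close>

definition mv_kernel :: "real \<Rightarrow> real \<Rightarrow> real \<Rightarrow> real" where
  "mv_kernel s r \<rho> = 1 / ((\<rho>\<^sup>2 - r\<^sup>2) powr s * \<rho>)"

definition levy_kernel :: "real \<Rightarrow> real \<Rightarrow> real" where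
  "levy_kernel s \<rho> = 1 / \<rho> powr (1 + 2 * s)"

lemma levy_kernel_measurable [measurable]: "levy_kernel s \<in> borel_measurable borel"
  unfolding levy_kernel_def by measurable

lemma mv_kernel_measurable [measurable]: "mv_kernel s r \<in> borel_measurable borel"
  unfolding mv_kernel_def by measurable

lemma square_powr:
  fixes x a :: real assumes "0 < x"
  shows "(x\<^sup>2) powr a = x powr (2 * a)"
proof -
  have "x\<^sup>2 = x powr 2" using assms by (simp add: powr_realpow)
  thus ?thesis by (simp add: powr_powr)
qed

lemma levy_kernel_le_mv_kernel:
  assumes "0 < r" "r < \<rho>" "0 < s"
  shows "levy_kernel s \<rho> \<le> mv_kernel s r \<rho>"
proof -
  have \<rho>: "\<rho> > 0" "\<rho>\<^sup>2 - r\<^sup>2 > 0" using assms by (auto simp: power2_eq_square mult_strict_mono)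
  have "(\<rho>\<^sup>2 - r\<^sup>2) powr s \<le> (\<rho>\<^sup>2) powr s" using \<rho> assms by (intro powr_mono2) auto
  also have "(\<rho>\<^sup>2) powr s = \<rho> powr (2 * s)" using \<rho>(1) by (rule square_powr)
  finally have "(\<rho>\<^sup>2 - r\<^sup>2) powr s * \<rho> \<le> \<rho> powr (1 + 2 * s)"
    using \<rho> by (simp add: powr_add mult.commute)
  thus ?thesis unfolding levy_kernel_def mv_kernel_def using \<rho> by (intro divide_left_mono) auto
qed

lemma mv_kernel_nonneg: "0 < r \<Longrightarrow> r < \<rho> \<Longrightarrow> 0 \<le> mv_kernel s r \<rho>"
  unfolding mv_kernel_def by simp

lemma levy_kernel_nonneg: "0 \<le> levy_kernel s \<rho>"
  unfolding levy_kernel_def by simp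

lemma Beta_complement_eq:
  fixes s :: real assumes "0 < s" "s < 1"
  shows "Beta (1 - s) s = pi / sin (pi * s)"
proof -
  have "Gamma (complex_of_real s) * Gamma (1 - complex_of_real s) = of_real pi / sin (of_real pi * of_real s)"
    by (rule Gamma_reflection_complex)
  hence "complex_of_real (Gamma s * Gamma (1 - s)) = complex_of_real (pi / sin (pi * s))"
    by (simp add: Gamma_complex_of_real[symmetric] sin_of_real[symmetric])
  hence "Gamma s * Gamma (1 - s) = pi / sin (pi * s)" by (simp only: of_real_eq_iff)
  thus ?thesis by (simp add: Beta_altdef mult.commute)
qed

lemma Beta_set_integral:
  fixes a b :: real assumes "0 < a" "0 < b"
  shows "set_integrable lborel {0<..<1} (\<lambda>t. t powr (a - 1) * (1 - t) powr (b - 1))"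
    "(LINT t:{0<..<1}|lborel. t powr (a - 1) * (1 - t) powr (b - 1)) = Beta a b"
proof -
  show i: "set_integrable lborel {0<..<1} (\<lambda>t. t powr (a - 1) * (1 - t) powr (b - 1))"
    by (rule set_integrable_subset[OF integrable_Beta[OF assms]]) auto
  have "(LINT t:{0<..<1}|lborel. t powr (a - 1) * (1 - t) powr (b - 1))
      = integral {0<..<1} (\<lambda>t. t powr (a - 1) * (1 - t) powr (b - 1))"
    by (rule set_borel_integral_eq_integral(2)[OF i])
  also have "\<dots> = integral {0..1} (\<lambda>t. t powr (a - 1) * (1 - t) powr (b - 1))"
    by (rule integral_open_interval_real[symmetric])
  also have "\<dots> = Beta a b" using has_integral_Beta_real[OF assms] by (rule integral_unique)
  finally show "(LINT t:{0<..<1}|lborel. t powr (a - 1) * (1 - t) powr (b - 1)) = Beta a b" .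
qed

text \<open>The substitution \<open>\<rho> = r (1 - t)\<^sup>-\<^sup>1\<^sup>/\<^sup>2\<close> turns the integral into \<open>r\<^sup>-\<^sup>2\<^sup>s B(1 - s, s) / 2\<close>.\<close>

lemma mv_kernel_integral:
  fixes r s :: real assumes r: "0 < r" and s: "0 < s" "s < 1"
  shows "set_integrable lborel {r<..} (mv_kernel s r)"
    "(LINT \<rho>:{r<..}|lborel. mv_kernel s r \<rho>) = r powr (- 2 * s) * pi / (2 * sin (pi * s))"
proof -
  define f where "f = mv_kernel s r"
  define g where "g u = r * (1 - u) powr (- (1 / 2))" for u :: real
  define g' where "g' u = r / 2 * (1 - u) powr (- (3 / 2))" for u :: real
  define C where "C = r powr (- 2 * s) / 2"
  have gr: "g u > r" if "0 < u" "u < 1" for u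
  proof -
    have "(1 - u) powr (- (1 / 2)) > 1"
      using powr_less_mono2_neg[of "- 1 / 2" "1 - u" 1] that by auto
    thus ?thesis unfolding g_def using r by simp
  qed
  have fg: "f (g u) * g' u = C * (u powr ((1 - s) - 1) * (1 - u) powr (s - 1))" if u: "0 < u" "u < 1" for u
  proof -
    define w where "w = 1 - u"
    have w: "0 < w" "w < 1" using u by (auto simp: w_def)
    have g2: "(g u)\<^sup>2 = r\<^sup>2 / w"
    proof -
      have "(w powr (- (1 / 2)))\<^sup>2 = w powr (- 1)"
        using w by (simp add: power2_eq_square powr_add[symmetric])
      moreover have "w powr (- 1) = 1 / w" using w powr_minus_divide[of w 1] by simp
      moreover have "(g u)\<^sup>2 = r\<^sup>2 * (w powr (- (1 / 2)))\<^sup>2" unfolding g_def w_def by (simp add: power_mult_distrib)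
      ultimately show ?thesis by simp
    qed
    have e1: "((g u)\<^sup>2 - r\<^sup>2) powr s = r powr (2 * s) * u powr s / w powr s"
    proof -
      have "(g u)\<^sup>2 - r\<^sup>2 = r\<^sup>2 * u / w" unfolding g2 using w by (simp add: field_simps w_def)
      moreover have "(r\<^sup>2) powr s = r powr (2 * s)" using r by (rule square_powr)
      ultimately show ?thesis using r u w by (simp add: powr_mult powr_divide)
    qed
    have h1: "w powr (- (1 / 2)) = 1 / w powr (1 / 2)" by (rule powr_minus_divide)
    have h3: "w powr (- (3 / 2)) = 1 / (w * w powr (1 / 2))"
    proof -
      have "w powr (1 + 1 / 2) = w powr 1 * w powr (1 / 2)" by (rule powr_add)
      hence "w powr (3 / 2) = w * w powr (1 / 2)" using w by simp
      thus ?thesis by (simp add: powr_minus_divide)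
    qed
    have h4: "w powr (s - 1) = w powr s / w" using w by (simp add: powr_diff)
    have h5: "u powr ((1 - s) - 1) = 1 / u powr s" using powr_minus_divide[of u s] by simp
    have h6: "r powr (- 2 * s) = 1 / r powr (2 * s)" using powr_minus_divide[of r "2 * s"] by simp
    have pos: "w powr (1 / 2) > 0" "u powr s > 0" "r powr (2 * s) > 0" "w powr s > 0" using u w r by auto
    show ?thesis
      unfolding f_def mv_kernel_def e1 C_def h6 h5 w_def[symmetric] h4
      unfolding g_def g'_def w_def[symmetric] h1 h3
      using pos r by (simp add: field_simps)
  qed
  have deriv_g: "(g has_real_derivative g' x) (at x)" if "ereal 0 < ereal x" "ereal x < ereal 1" for x
  proof -
    have "(g has_real_derivative r * ((- (1 / 2)) * (1 - x) powr (- (1 / 2) - 1) * (0 - 1))) (at x)"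
      unfolding g_def using that by (auto intro!: derivative_eq_intros)
    moreover have "r * ((- (1 / 2)) * (1 - x) powr (- (1 / 2) - 1) * (0 - 1)) = g' x"
      unfolding g'_def by (simp add: algebra_simps)
    ultimately show ?thesis by simp
  qed
  have contf: "isCont f (g x)" if "ereal 0 < ereal x" "ereal x < ereal 1" for x
  proof -
    have gx: "g x > r" using gr that by auto
    hence "(g x)\<^sup>2 - r\<^sup>2 > 0" using r by (simp add: power_strict_mono)
    thus ?thesis unfolding f_def mv_kernel_def using gx r by (auto intro!: continuous_intros)
  qed
  have contg': "isCont g' x" if "ereal 0 < ereal x" "ereal x < ereal 1" for x
    unfolding g'_def using that by (auto intro!: continuous_intros)
  have f_nonneg: "0 \<le> f (g x)" if "ereal 0 < ereal x" "ereal x < ereal 1" for x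
    unfolding f_def using gr that r by (intro mv_kernel_nonneg) auto
  have g'_nonneg: "0 \<le> g' x" for x unfolding g'_def using r by simp
  have lim0: "((ereal \<circ> g \<circ> real_of_ereal) \<longlongrightarrow> ereal r) (at_right (ereal 0))"
  proof -
    have "(g \<longlongrightarrow> r) (at_right 0)" unfolding g_def by real_asymp
    thus ?thesis unfolding ereal_tendsto_simps by simp
  qed
  have lim1: "((ereal \<circ> g \<circ> real_of_ereal) \<longlongrightarrow> \<infinity>) (at_left (ereal 1))"
  proof -
    have "filterlim g at_top (at_left 1)" unfolding g_def using r by real_asymp
    thus ?thesis unfolding ereal_tendsto_simps by simp
  qed
  have Beta_int: "set_integrable lborel {0<..<1} (\<lambda>x. C * (x powr ((1 - s) - 1) * (1 - x) powr (s - 1)))"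
    using Beta_set_integral(1)[of "1 - s" s] s by simp
  have fg_int: "set_integrable lborel (einterval (ereal 0) (ereal 1)) (\<lambda>x. f (g x) * g' x)"
    using Beta_int by (subst set_integrable_cong[OF refl refl,
        where f' = "\<lambda>x. C * (x powr ((1 - s) - 1) * (1 - x) powr (s - 1))"]) (auto simp: fg)
  note subst = interval_integral_substitution_nonneg[of "ereal 0" "ereal 1" g g' f,
      OF _ deriv_g contf contg' f_nonneg g'_nonneg lim0 lim1 fg_int]
  show "set_integrable lborel {r<..} (mv_kernel s r)" using subst(1) by (simp add: f_def)
  have "(LINT \<rho>:{r<..}|lborel. f \<rho>) = (LINT x:{0<..<1}|lborel. f (g x) * g' x)"
    using subst(2) by (simp add: interval_integral_to_infinity_eq interval_integral_Ioo)
  also have "\<dots> = (LINT x:{0<..<1}|lborel. C * (x powr ((1 - s) - 1) * (1 - x) powr (s - 1)))"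
    by (rule set_lebesgue_integral_cong) (auto simp: fg)
  also have "\<dots> = C * Beta (1 - s) s"
    using Beta_set_integral(2)[of "1 - s" s] s by simp
  also have "\<dots> = r powr (- 2 * s) * pi / (2 * sin (pi * s))"
    unfolding C_def Beta_complement_eq[OF s] by simp
  finally show "(LINT \<rho>:{r<..}|lborel. mv_kernel s r \<rho>) = r powr (- 2 * s) * pi / (2 * sin (pi * s))"
    by (simp add: f_def)
qed

lemma kernel_gap_second_moment:
  fixes r s :: real assumes r: "0 < r" and s: "0 < s" "s < 1"
  shows "set_integrable lborel {r<..} (\<lambda>\<rho>. \<rho>\<^sup>2 * (mv_kernel s r \<rho> - levy_kernel s \<rho>))"
    "(LINT \<rho>:{r<..}|lborel. \<rho>\<^sup>2 * (mv_kernel s r \<rho> - levy_kernel s \<rho>)) = r powr (2 - 2 * s) / (2 * (1 - s))"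
proof -
  define f where "f = (\<lambda>\<rho>. \<rho>\<^sup>2 * (mv_kernel s r \<rho> - levy_kernel s \<rho>))"
  define F where "F \<rho> = ((\<rho>\<^sup>2 - r\<^sup>2) powr (1 - s) - (\<rho>\<^sup>2) powr (1 - s)) / (2 * (1 - s))" for \<rho>
  have deriv: "(F has_real_derivative f x) (at x)" if "r < x" for x
  proof -
    have x0: "x > 0" "x\<^sup>2 - r\<^sup>2 > 0" using that r by (auto simp: power2_eq_square mult_strict_mono)
    have "(F has_real_derivative
       (((1 - s) * (x\<^sup>2 - r\<^sup>2) powr (1 - s - 1) * (2 * x) - (1 - s) * (x\<^sup>2) powr (1 - s - 1) * (2 * x)) / (2 * (1 - s)))) (at x)"
      unfolding F_def using x0 s by (auto intro!: derivative_eq_intros)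
    moreover have "((1 - s) * (x\<^sup>2 - r\<^sup>2) powr (1 - s - 1) * (2 * x) - (1 - s) * (x\<^sup>2) powr (1 - s - 1) * (2 * x)) / (2 * (1 - s))
       = x * (x\<^sup>2 - r\<^sup>2) powr (- s) - x * (x\<^sup>2) powr (- s)"
      using s by (simp add: field_simps)
    moreover have "x * (x\<^sup>2 - r\<^sup>2) powr (- s) = x\<^sup>2 * mv_kernel s r x"
      unfolding mv_kernel_def using x0 by (simp add: powr_minus field_simps power2_eq_square)
    moreover have "x * (x\<^sup>2) powr (- s) = x\<^sup>2 * levy_kernel s x"
    proof -
      have "(x\<^sup>2) powr (- s) = 1 / x powr (2 * s)"
        using x0 by (simp add: square_powr powr_minus divide_inverse)
      thus ?thesis unfolding levy_kernel_def using x0 by (simp add: powr_add field_simps power2_eq_square)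
    qed
    ultimately show ?thesis unfolding f_def by (simp add: right_diff_distrib)
  qed
  have cont: "isCont f x" if "r < x" for x
  proof -
    have "x > 0" "x\<^sup>2 - r\<^sup>2 > 0" using that r by (auto simp: power2_eq_square mult_strict_mono)
    thus ?thesis unfolding f_def mv_kernel_def levy_kernel_def by (auto intro!: continuous_intros)
  qed
  have nonneg: "0 \<le> f x" if "r < x" for x
    unfolding f_def using levy_kernel_le_mv_kernel[OF r that s(1)] by simp
  have lim_r: "((F \<circ> real_of_ereal) \<longlongrightarrow> - (r powr (2 - 2 * s) / (2 * (1 - s)))) (at_right (ereal r))"
  proof -
    have e: "(r\<^sup>2) powr (1 - s) = r powr (2 - 2 * s)"
      using r by (simp add: square_powr algebra_simps)
    have "(F \<longlongrightarrow> (0 - (r\<^sup>2) powr (1 - s)) / (2 * (1 - s))) (at_right r)"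
      unfolding F_def using r s apply real_asymp by (simp add: field_simps)
    thus ?thesis unfolding ereal_tendsto_simps e by simp
  qed
  have lim_inf: "((F \<circ> real_of_ereal) \<longlongrightarrow> 0) (at_left \<infinity>)"
  proof -
    have "(F \<longlongrightarrow> 0) at_top" unfolding F_def using r s by real_asymp
    thus ?thesis unfolding ereal_tendsto_simps by simp
  qed
  note ftc = interval_integral_FTC_nonneg[of "ereal r" \<infinity> F f, OF _ _ _ _ lim_r lim_inf]
  have "set_integrable lborel {r<..} f" "(LINT \<rho>:{r<..}|lborel. f \<rho>) = r powr (2 - 2 * s) / (2 * (1 - s))"
    using ftc deriv cont nonneg by (auto simp: interval_integral_to_infinity_eq)
  then show "set_integrable lborel {r<..} (\<lambda>\<rho>. \<rho>\<^sup>2 * (mv_kernel s r \<rho> - levy_kernel s \<rho>))"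
    "(LINT \<rho>:{r<..}|lborel. \<rho>\<^sup>2 * (mv_kernel s r \<rho> - levy_kernel s \<rho>)) = r powr (2 - 2 * s) / (2 * (1 - s))"
    unfolding f_def .
qed

lemma levy_kernel_second_moment:
  fixes r s :: real assumes r: "0 < r" and s: "0 < s" "s < 1"
  shows "set_integrable lborel {0<..r} (\<lambda>\<rho>. \<rho>\<^sup>2 * levy_kernel s \<rho>)"
    "(LINT \<rho>:{0<..r}|lborel. \<rho>\<^sup>2 * levy_kernel s \<rho>) = r powr (2 - 2 * s) / (2 - 2 * s)"
proof -
  define f where "f \<rho> = \<rho>\<^sup>2 * levy_kernel s \<rho>" for \<rho>
  define F where "F \<rho> = \<rho> powr (2 - 2 * s) / (2 - 2 * s)" for \<rho> :: real
  have deriv: "(F has_real_derivative f x) (at x)" if "0 < x" for x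
  proof -
    have "(F has_real_derivative ((2 - 2 * s) * x powr (2 - 2 * s - 1) / (2 - 2 * s))) (at x)"
      unfolding F_def using that s by (auto intro!: derivative_eq_intros)
    moreover have "f x = x powr (1 - 2 * s)"
      unfolding f_def levy_kernel_def using that by (simp add: powr_add powr_diff field_simps power2_eq_square)
    moreover have "(2 - 2 * s) * x powr (2 - 2 * s - 1) / (2 - 2 * s) = x powr (1 - 2 * s)"
      using s by (simp add: nonzero_mult_div_cancel_left del: mult_minus_left)
    ultimately show ?thesis by simp
  qed
  have cont: "isCont f x" if "0 < x" for x
    unfolding f_def levy_kernel_def using that by (auto intro!: continuous_intros)
  have nonneg: "0 \<le> f x" for x unfolding f_def by (simp add: levy_kernel_nonneg)
  have lim0: "((F \<circ> real_of_ereal) \<longlongrightarrow> 0) (at_right (ereal 0))"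
  proof -
    have "(F \<longlongrightarrow> 0) (at_right 0)" unfolding F_def using s by real_asymp
    thus ?thesis unfolding ereal_tendsto_simps by simp
  qed
  have lim_r: "((F \<circ> real_of_ereal) \<longlongrightarrow> F r) (at_left (ereal r))"
  proof -
    have "(F \<longlongrightarrow> F r) (at_left r)" unfolding F_def using s r by (intro tendsto_intros) auto
    thus ?thesis unfolding ereal_tendsto_simps by simp
  qed
  note ftc = interval_integral_FTC_nonneg[of "ereal 0" "ereal r" F f, OF _ _ _ _ lim0 lim_r]
  have open_int: "set_integrable lborel {0<..<r} f" and open_val: "(LINT \<rho>:{0<..<r}|lborel. f \<rho>) = F r"
    using ftc deriv cont nonneg r by (auto simp: interval_integral_Ioo)
  have endpoint: "AE x in lborel. indicator {0<..<r} x *\<^sub>R f x = indicator {0<..r} x *\<^sub>R f x"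
    using AE_lborel_singleton[of r] by eventually_elim (auto simp: indicator_def)
  have meas_closed: "(\<lambda>x. indicator {0<..r} x *\<^sub>R f x) \<in> borel_measurable lborel"
    unfolding f_def by measurable
  have meas_open: "(\<lambda>x. indicator {0<..<r} x *\<^sub>R f x) \<in> borel_measurable lborel"
    unfolding f_def by measurable
  show "set_integrable lborel {0<..r} (\<lambda>\<rho>. \<rho>\<^sup>2 * levy_kernel s \<rho>)"
    using integrable_cong_AE_imp[OF open_int[unfolded set_integrable_def] meas_closed endpoint]
    unfolding set_integrable_def f_def .
  have "(LINT \<rho>:{0<..r}|lborel. f \<rho>) = (LINT \<rho>:{0<..<r}|lborel. f \<rho>)"
    unfolding set_lebesgue_integral_def
    by (rule integral_cong_AE[OF meas_closed meas_open AE_symmetric[OF endpoint]])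
  also have "\<dots> = F r" by (rule open_val)
  finally show "(LINT \<rho>:{0<..r}|lborel. \<rho>\<^sup>2 * levy_kernel s \<rho>) = r powr (2 - 2 * s) / (2 - 2 * s)"
    unfolding f_def F_def .
qed

lemma set_integral_abs_le:
  fixes f g :: "'a \<Rightarrow> real"
  assumes "set_integrable M A f" "set_integrable M A g" "\<And>x. x \<in> A \<Longrightarrow> \<bar>f x\<bar> \<le> g x"
  shows "\<bar>LINT x:A|M. f x\<bar> \<le> (LINT x:A|M. g x)"
proof -
  have "\<bar>LINT x:A|M. f x\<bar> \<le> (LINT x:A|M. \<bar>f x\<bar>)"
    using set_integral_norm_bound[OF assms(1)] by simp
  also have "\<dots> \<le> (LINT x:A|M. g x)"
    using set_integral_mono[OF set_integrable_norm[OF assms(1)] assms(2)] assms(3) by simp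
  finally show ?thesis .
qed

text \<open>Split off \<open>(0, r]\<close>: there the Levy kernel has second moment \<open>O(r\<^sup>2\<^sup>-\<^sup>2\<^sup>s)\<close>, and on
  \<open>(r, \<infinity>)\<close> the two kernels differ by a function with second moment of the same order.\<close>

lemma radial_kernel_comparison:
  fixes F :: "real \<Rightarrow> real"
  assumes r: "0 < r" and s: "0 < s" "s < 1" and F_meas [measurable]: "F \<in> borel_measurable borel"
    and quadratic: "\<And>\<rho>. \<bar>F \<rho>\<bar> \<le> A * \<rho>\<^sup>2" and bounded: "\<And>\<rho>. \<bar>F \<rho>\<bar> \<le> B"
  shows "set_integrable lborel {r<..} (\<lambda>\<rho>. F \<rho> * mv_kernel s r \<rho>)"
    "\<bar>(LINT \<rho>:{r<..}|lborel. F \<rho> * mv_kernel s r \<rho>) - (LINT \<rho>:{0<..}|lborel. F \<rho> * levy_kernel s \<rho>)\<bar>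
       \<le> A * r powr (2 - 2 * s) / (1 - s)"
proof -
  let ?k = "mv_kernel s r" and ?q = "levy_kernel s"
  have A0: "0 \<le> A" using quadratic[of 1] by simp
  have gap: "0 \<le> ?k \<rho> - ?q \<rho>" "0 \<le> ?k \<rho>" if "r < \<rho>" for \<rho>
    using levy_kernel_le_mv_kernel[OF r that s(1)] mv_kernel_nonneg[OF r that] by auto
  have bound_gap: "\<bar>F \<rho> * (?k \<rho> - ?q \<rho>)\<bar> \<le> A * (\<rho>\<^sup>2 * (?k \<rho> - ?q \<rho>))" if "r < \<rho>" for \<rho>
    using mult_right_mono[OF quadratic[of \<rho>] gap(1)[OF that]] gap(1)[OF that] by (simp add: abs_mult mult_ac)
  have bound_near: "\<bar>F \<rho> * ?q \<rho>\<bar> \<le> A * (\<rho>\<^sup>2 * ?q \<rho>)" for \<rho>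
    using mult_right_mono[OF quadratic[of \<rho>] levy_kernel_nonneg] by (simp add: abs_mult levy_kernel_nonneg mult_ac)
  note gap_moment = kernel_gap_second_moment[OF r s]
  note near_moment = levy_kernel_second_moment[OF r s]
  show int_k: "set_integrable lborel {r<..} (\<lambda>\<rho>. F \<rho> * ?k \<rho>)"
  proof (rule set_integrable_bound[where f = "\<lambda>\<rho>. B * ?k \<rho>"])
    have "\<bar>F \<rho>\<bar> * ?k \<rho> \<le> \<bar>B\<bar> * ?k \<rho>" if "r < \<rho>" for \<rho>
      using bounded[of \<rho>] gap(2)[OF that] by (intro mult_right_mono) auto
    then show "AE \<rho> in lborel. \<rho> \<in> {r<..} \<longrightarrow> norm (F \<rho> * ?k \<rho>) \<le> norm (B * ?k \<rho>)"
      using gap(2) by (auto simp: abs_mult)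
  qed (use mv_kernel_integral(1)[OF r s] in \<open>auto simp: set_borel_measurable_def\<close>)
  have int_gap: "set_integrable lborel {r<..} (\<lambda>\<rho>. F \<rho> * (?k \<rho> - ?q \<rho>))"
  proof (rule set_integrable_bound[where f = "\<lambda>\<rho>. A * (\<rho>\<^sup>2 * (?k \<rho> - ?q \<rho>))"])
    show "AE \<rho> in lborel. \<rho> \<in> {r<..} \<longrightarrow> norm (F \<rho> * (?k \<rho> - ?q \<rho>)) \<le> norm (A * (\<rho>\<^sup>2 * (?k \<rho> - ?q \<rho>)))"
      using bound_gap by (auto intro!: AE_I2 order_trans[OF _ abs_ge_self])
  qed (use gap_moment(1) in \<open>auto simp: set_borel_measurable_def\<close>)
  have int_near: "set_integrable lborel {0<..r} (\<lambda>\<rho>. F \<rho> * ?q \<rho>)"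
  proof (rule set_integrable_bound[where f = "\<lambda>\<rho>. A * (\<rho>\<^sup>2 * ?q \<rho>)"])
    show "AE \<rho> in lborel. \<rho> \<in> {0<..r} \<longrightarrow> norm (F \<rho> * ?q \<rho>) \<le> norm (A * (\<rho>\<^sup>2 * ?q \<rho>))"
      using bound_near by (auto intro!: AE_I2 order_trans[OF _ abs_ge_self])
  qed (use near_moment(1) in \<open>auto simp: set_borel_measurable_def\<close>)
  have int_far: "set_integrable lborel {r<..} (\<lambda>\<rho>. F \<rho> * ?q \<rho>)"
    using set_integral_diff(1)[OF int_k int_gap] by (simp add: algebra_simps)
  define P where "P = (LINT \<rho>:{r<..}|lborel. F \<rho> * (?k \<rho> - ?q \<rho>))"
  define Q where "Q = (LINT \<rho>:{0<..r}|lborel. F \<rho> * ?q \<rho>)"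
  have "(LINT \<rho>:{0<..}|lborel. F \<rho> * ?q \<rho>) = Q + (LINT \<rho>:{r<..}|lborel. F \<rho> * ?q \<rho>)"
  proof -
    have "{0<..} = {0<..r} \<union> {r<..}" using r by auto
    moreover have "{0<..r} \<inter> {r<..} = {}" by auto
    ultimately show ?thesis using set_integral_Un[OF _ int_near int_far] unfolding Q_def by simp
  qed
  moreover have "(LINT \<rho>:{r<..}|lborel. F \<rho> * ?k \<rho>) = P + (LINT \<rho>:{r<..}|lborel. F \<rho> * ?q \<rho>)"
    using set_integral_diff(2)[OF int_k int_far] unfolding P_def by (simp add: algebra_simps)
  moreover have "\<bar>P\<bar> \<le> A * (r powr (2 - 2 * s) / (2 * (1 - s)))"
    using set_integral_abs_le[OF int_gap set_integrable_mult_right[OF gap_moment(1)] bound_gap]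
    unfolding P_def gap_moment(2) set_integral_mult_right by simp
  moreover have "\<bar>Q\<bar> \<le> A * (r powr (2 - 2 * s) / (2 - 2 * s))"
    using set_integral_abs_le[OF int_near set_integrable_mult_right[OF near_moment(1)] bound_near]
    unfolding Q_def near_moment(2) set_integral_mult_right by simp
  moreover have "A * (r powr (2 - 2 * s) / (2 * (1 - s))) + A * (r powr (2 - 2 * s) / (2 - 2 * s))
      = A * r powr (2 - 2 * s) / (1 - s)"
    using s by (simp add: divide_simps)
  ultimately show "\<bar>(LINT \<rho>:{r<..}|lborel. F \<rho> * ?k \<rho>) - (LINT \<rho>:{0<..}|lborel. F \<rho> * ?q \<rho>)\<bar>
      \<le> A * r powr (2 - 2 * s) / (1 - s)"
    by linarith
qed

lemma spectral_measureD:
  assumes "spectral_measure (a :: (real^'n) measure)"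
  shows "finite_measure a" "space a = sphere 0 1" "0 < measure a (space a)"
    and measurable_spectral_measure: "\<And>h. h \<in> borel_measurable borel \<Longrightarrow> h \<in> borel_measurable a"
proof -
  have sets: "sets a = sets (restrict_space borel (sphere (0::real^'n) 1))"
    using assms unfolding spectral_measure_def by auto
  show "finite_measure a" "0 < measure a (space a)" using assms unfolding spectral_measure_def by auto
  show "space a = sphere 0 1" using sets_eq_imp_space_eq[OF sets] by (simp add: space_restrict_space)
  show "h \<in> borel_measurable a" if "h \<in> borel_measurable borel" for h :: "real^'n \<Rightarrow> 'b::topological_space"
    unfolding measurable_cong_sets[OF sets refl] by (rule measurable_restrict_space1[OF that])
qed

lemma cnst_pos:
  assumes "0 < s" "s < 1" "spectral_measure a"
  shows "0 < cnst a s"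
proof -
  have "sin (pi * s) > 0" using assms by (intro sin_gt_zero) auto
  then show ?thesis using spectral_measureD(3)[OF assms(3)] unfolding cnst_def by simp
qed

lemma measurable_scaled_sphere_point:
  assumes "spectral_measure (a :: (real^'n) measure)"
  shows "(\<lambda>p. fst p *\<^sub>R snd p) \<in> borel_measurable (lborel \<Otimes>\<^sub>M a)"
proof -
  have "snd \<in> borel_measurable (lborel \<Otimes>\<^sub>M a)"
    using measurable_compose[OF measurable_snd measurable_spectral_measure[OF assms measurable_ident]]
    by (simp add: comp_def)
  then show ?thesis using measurable_fst[of lborel a] by (intro borel_measurable_scaleR) simp_all
qed

definition spherical_delta :: "(real^'n) measure \<Rightarrow> (real^'n \<Rightarrow> real) \<Rightarrow> real^'n \<Rightarrow> real \<Rightarrow> real" where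
  "spherical_delta a v x \<rho> = (\<integral>\<omega>. delta v x (\<rho> *\<^sub>R \<omega>) \<partial>a)"

lemma
  fixes v :: "real^'n \<Rightarrow> real"
  assumes a: "spectral_measure a" and v_meas [measurable]: "v \<in> borel_measurable borel"
    and v_bounded: "\<And>y. \<bar>v y\<bar> \<le> B"
  shows integrable_delta_sphere: "integrable a (\<lambda>\<omega>. delta v x (\<rho> *\<^sub>R \<omega>))"
    and spherical_delta_measurable: "spherical_delta a v x \<in> borel_measurable borel"
    and spherical_delta_bounded: "\<bar>spherical_delta a v x \<rho>\<bar> \<le> measure a (space a) * (4 * B)"
proof -
  interpret finite_measure a using spectral_measureD(1)[OF a] .
  have delta_bounded: "\<bar>delta v x y\<bar> \<le> 4 * B" for y
    using v_bounded[of x] v_bounded[of "x - y"] v_bounded[of "x + y"] unfolding delta_def by linarith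
  show int: "integrable a (\<lambda>\<omega>. delta v x (\<rho> *\<^sub>R \<omega>))" for \<rho>
  proof (rule integrable_const_bound[where B = "4 * B"])
    show "(\<lambda>\<omega>. delta v x (\<rho> *\<^sub>R \<omega>)) \<in> borel_measurable a"
      by (rule measurable_spectral_measure[OF a]) (unfold delta_def, measurable)
  qed (use delta_bounded in auto)
  have "(\<lambda>p. delta v x (fst p *\<^sub>R snd p)) \<in> borel_measurable (lborel \<Otimes>\<^sub>M a)"
    using measurable_scaled_sphere_point[OF a] unfolding delta_def by measurable
  then have "(\<lambda>\<rho>. \<integral>\<omega>. delta v x (\<rho> *\<^sub>R \<omega>) \<partial>a) \<in> borel_measurable lborel"
    by (intro borel_measurable_lebesgue_integral) (simp add: case_prod_beta')
  then show "spherical_delta a v x \<in> borel_measurable borel"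
    unfolding spherical_delta_def by simp
  show "\<bar>spherical_delta a v x \<rho>\<bar> \<le> measure a (space a) * (4 * B)"
  proof -
    have "\<bar>spherical_delta a v x \<rho>\<bar> \<le> (\<integral>\<omega>. 4 * B \<partial>a)"
      unfolding spherical_delta_def
      by (rule integral_abs_bound_integral[OF int integrable_const]) (rule delta_bounded)
    then show ?thesis by simp
  qed
qed

lemma spherical_delta_quadratic:
  fixes v :: "real^'n \<Rightarrow> real"
  assumes a: "spectral_measure a" and "v \<in> borel_measurable borel" "\<And>y. \<bar>v y\<bar> \<le> B"
    and quadratic: "\<And>y. \<bar>delta v x y\<bar> \<le> K * (norm y)\<^sup>2"
  shows "\<bar>spherical_delta a v x \<rho>\<bar> \<le> measure a (space a) * K * \<rho>\<^sup>2"
proof -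
  interpret finite_measure a using spectral_measureD(1)[OF a] .
  have "\<bar>spherical_delta a v x \<rho>\<bar> \<le> (\<integral>\<omega>. K * \<rho>\<^sup>2 \<partial>a)"
    unfolding spherical_delta_def
  proof (rule integral_abs_bound_integral[OF integrable_delta_sphere[OF assms(1-3)] integrable_const])
    fix \<omega> assume "\<omega> \<in> space a"
    then have "norm \<omega> = 1" using spectral_measureD(2)[OF a] by simp
    then show "\<bar>delta v x (\<rho> *\<^sub>R \<omega>)\<bar> \<le> K * \<rho>\<^sup>2" using quadratic[of "\<rho> *\<^sub>R \<omega>"] by simp
  qed
  then show ?thesis by (simp add: mult_ac)
qed

lemma Lop_eq_spherical_delta:
  "Lop a s v x = (LINT \<rho>:{0<..}|lborel. spherical_delta a v x \<rho> * levy_kernel s \<rho>)"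
  unfolding Lop_def spherical_delta_def levy_kernel_def by simp

lemma Mop_eq_spherical_delta:
  fixes v :: "real^'n \<Rightarrow> real"
  assumes a: "spectral_measure a" and "v \<in> borel_measurable borel" "\<And>y. \<bar>v y\<bar> \<le> B"
  shows "Mop a s r v x = cnst a s * r powr (2 * s) *
    (LINT \<rho>:{r<..}|lborel. (2 * measure a (space a) * v x - spherical_delta a v x \<rho>) * mv_kernel s r \<rho>)"
proof -
  interpret finite_measure a using spectral_measureD(1)[OF a] .
  have "(\<integral>\<omega>. v (x + \<rho> *\<^sub>R \<omega>) + v (x - \<rho> *\<^sub>R \<omega>) \<partial>a) = 2 * measure a (space a) * v x - spherical_delta a v x \<rho>"
    for \<rho>
  proof -
    have "(\<integral>\<omega>. v (x + \<rho> *\<^sub>R \<omega>) + v (x - \<rho> *\<^sub>R \<omega>) \<partial>a) = (\<integral>\<omega>. 2 * v x - delta v x (\<rho> *\<^sub>R \<omega>) \<partial>a)"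
      unfolding delta_def by (simp add: algebra_simps)
    also have "\<dots> = 2 * measure a (space a) * v x - spherical_delta a v x \<rho>"
      unfolding spherical_delta_def
      by (subst Bochner_Integration.integral_diff[OF integrable_const integrable_delta_sphere[OF assms]]) simp
    finally show ?thesis .
  qed
  then show ?thesis unfolding Mop_def mv_kernel_def by simp
qed

text \<open>The normalisation \<open>\<M>\<^sub>r 1 = 1\<close> that fixes the constant \<open>c(n, s, a)\<close>.\<close>

lemma cnst_mv_kernel_normalised:
  assumes r: "0 < r" and s: "0 < s" "s < 1" and a: "spectral_measure a"
  shows "cnst a s * r powr (2 * s) * (2 * measure a (space a) * (LINT \<rho>:{r<..}|lborel. mv_kernel s r \<rho>)) = 1"
proof -
  have "sin (pi * s) > 0" using s by (intro sin_gt_zero) auto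
  moreover have "r powr (2 * s) * r powr (- 2 * s) = 1" using r by (simp add: powr_add[symmetric])
  ultimately show ?thesis
    using spectral_measureD(3)[OF a] unfolding mv_kernel_integral(2)[OF r s] cnst_def
    by (simp add: field_simps)
qed

lemma mean_value_expansion:
  fixes v :: "real^'n \<Rightarrow> real"
  assumes r: "0 < r" and s: "0 < s" "s < 1" and a: "spectral_measure a"
    and v_meas: "v \<in> borel_measurable borel" and v_bounded: "\<And>y. \<bar>v y\<bar> \<le> B"
    and quadratic: "\<And>y. \<bar>delta v x y\<bar> \<le> K * (norm y)\<^sup>2"
  shows "\<bar>v x - Mop a s r v x - cnst a s * r powr (2 * s) * Lop a s v x\<bar>
    \<le> cnst a s * measure a (space a) * K / (1 - s) * r\<^sup>2"
proof -
  define m where "m = measure a (space a)"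
  define c where "c = cnst a s * r powr (2 * s)"
  define F where "F = spherical_delta a v x"
  define S where "S = (LINT \<rho>:{r<..}|lborel. F \<rho> * mv_kernel s r \<rho>)"
  note comparison = radial_kernel_comparison[OF r s,
      OF spherical_delta_measurable[OF a v_meas v_bounded]
         spherical_delta_quadratic[OF a v_meas v_bounded quadratic]
         spherical_delta_bounded[OF a v_meas v_bounded], folded m_def F_def S_def]
  have "Mop a s r v x = c * (LINT \<rho>:{r<..}|lborel. 2 * m * v x * mv_kernel s r \<rho> - F \<rho> * mv_kernel s r \<rho>)"
    unfolding Mop_eq_spherical_delta[OF a v_meas v_bounded] c_def m_def F_def by (simp add: algebra_simps)
  also have "\<dots> = c * (2 * m * (LINT \<rho>:{r<..}|lborel. mv_kernel s r \<rho>) * v x - S)"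
    using mv_kernel_integral(1)[OF r s] comparison(1) unfolding S_def by simp
  also have "\<dots> = v x - c * S"
    using cnst_mv_kernel_normalised[OF r s a] unfolding c_def m_def by (simp add: algebra_simps)
  finally have "v x - Mop a s r v x - c * Lop a s v x = c * (S - Lop a s v x)"
    by (simp add: algebra_simps)
  moreover have "0 \<le> c" unfolding c_def using cnst_pos[OF s a] by simp
  moreover have "\<bar>S - Lop a s v x\<bar> \<le> m * K * r powr (2 - 2 * s) / (1 - s)"
    using comparison(2) unfolding Lop_eq_spherical_delta F_def[symmetric] S_def .
  ultimately have "\<bar>v x - Mop a s r v x - c * Lop a s v x\<bar> \<le> c * (m * K * r powr (2 - 2 * s) / (1 - s))"
    by (metis abs_mult abs_of_nonneg mult_left_mono)
  also have "\<dots> = cnst a s * m * K / (1 - s) * (r powr (2 * s) * r powr (2 - 2 * s))"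
    unfolding c_def by (simp add: field_simps)
  also have "r powr (2 * s) * r powr (2 - 2 * s) = r\<^sup>2"
    using r by (simp add: powr_add[symmetric] powr_realpow)
  finally show ?thesis unfolding c_def m_def .
qed

lemma C2_on_derivative_lipschitz:
  fixes \<phi> :: "real^'n \<Rightarrow> real"
  assumes C2: "C2_on T \<phi>" and sub: "cball x e \<subseteq> interior T"
  obtains D :: "real^'n \<Rightarrow> ((real^'n) \<Rightarrow>\<^sub>L real)" and M where "0 \<le> M"
    "\<And>p. p \<in> cball x e \<Longrightarrow> (\<phi> has_derivative blinfun_apply (D p)) (at p)"
    "\<And>p q. p \<in> cball x e \<Longrightarrow> q \<in> cball x e \<Longrightarrow> norm (D p - D q) \<le> M * norm (p - q)"
proof -
  from C2 obtain D :: "real^'n \<Rightarrow> ((real^'n) \<Rightarrow>\<^sub>L real)"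
    and D2 :: "real^'n \<Rightarrow> ((real^'n) \<Rightarrow>\<^sub>L ((real^'n) \<Rightarrow>\<^sub>L real))"
    where derivs: "\<And>y. y \<in> T \<Longrightarrow> (\<phi> has_derivative blinfun_apply (D y)) (at y within T)
            \<and> (D has_derivative blinfun_apply (D2 y)) (at y within T)"
      and D2_cont: "continuous_on T D2"
    unfolding C2_on_def by blast
  have subT: "cball x e \<subseteq> T" using sub interior_subset by blast
  have at_p: "at p within T = at p" if "p \<in> cball x e" for p
    using that sub by (auto intro: at_within_interior)
  have D: "(\<phi> has_derivative blinfun_apply (D p)) (at p)"
    and D2: "(D has_derivative blinfun_apply (D2 p)) (at p)" if "p \<in> cball x e" for p
    using derivs[of p] at_p[OF that] that subT by auto
  have "compact (D2 ` cball x e)"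
    by (rule compact_continuous_image) (use continuous_on_subset[OF D2_cont subT] in auto)
  then obtain M where M: "\<And>p. p \<in> cball x e \<Longrightarrow> norm (D2 p) \<le> M"
    using compact_imp_bounded[of "D2 ` cball x e"] unfolding bounded_iff by (metis image_eqI)
  have "norm (D p - D q) \<le> max M 0 * norm (p - q)" if "p \<in> cball x e" "q \<in> cball x e" for p q
  proof (rule differentiable_bound[where S = "cball x e" and f' = "\<lambda>p. blinfun_apply (D2 p)"])
    show "(D has_derivative blinfun_apply (D2 p)) (at p within cball x e)" if "p \<in> cball x e" for p
      using D2[OF that] by (rule has_derivative_at_withinI)
    show "onorm (blinfun_apply (D2 p)) \<le> max M 0" if "p \<in> cball x e" for p
      using M[OF that] by (simp add: norm_blinfun.rep_eq)
  qed (use that in auto)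
  moreover have "0 \<le> max M 0" by simp
  ultimately show ?thesis using that D by blast
qed

lemma delta_quadratic_of_lipschitz_derivative:
  fixes \<phi> :: "real^'n \<Rightarrow> real" and D :: "real^'n \<Rightarrow> ((real^'n) \<Rightarrow>\<^sub>L real)"
  assumes D: "\<And>p. p \<in> cball x e \<Longrightarrow> (\<phi> has_derivative blinfun_apply (D p)) (at p)"
    and lipschitz: "\<And>p q. p \<in> cball x e \<Longrightarrow> q \<in> cball x e \<Longrightarrow> norm (D p - D q) \<le> M * norm (p - q)"
    and "0 \<le> M" and y: "norm y \<le> e"
  shows "\<bar>delta \<phi> x y\<bar> \<le> 2 * M * (norm y)\<^sup>2"
proof -
  define g where "g z = \<phi> (x + z) + \<phi> (x - z)" for z
  define S where "S = cball (0::real^'n) (norm y)"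
  have in_ball: "x + z \<in> cball x e" "x - z \<in> cball x e" if "z \<in> S" for z
    using that y unfolding S_def by (auto simp: dist_norm)
  have g_deriv: "(g has_derivative (\<lambda>w. blinfun_apply (D (x + z) - D (x - z)) w)) (at z within S)"
    if "z \<in> S" for z
  proof -
    have "((\<lambda>z. x + z) has_derivative (\<lambda>w. w)) (at z within S)"
      and "((\<lambda>z. x - z) has_derivative (\<lambda>w. - w)) (at z within S)"
      by (auto intro!: derivative_eq_intros)
    from has_derivative_compose[OF this(1) D[OF in_ball(1)[OF that]]]
      has_derivative_compose[OF this(2) D[OF in_ball(2)[OF that]]]
    have plus: "((\<lambda>z. \<phi> (x + z)) has_derivative blinfun_apply (D (x + z))) (at z within S)"
      and minus: "((\<lambda>z. \<phi> (x - z)) has_derivative (\<lambda>w. blinfun_apply (D (x - z)) (- w))) (at z within S)"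
      by simp_all
    have "(g has_derivative (\<lambda>w. blinfun_apply (D (x + z)) w + blinfun_apply (D (x - z)) (- w))) (at z within S)"
      unfolding g_def by (rule has_derivative_add[OF plus minus])
    then show ?thesis by (simp add: blinfun.bilinear_simps)
  qed
  have g'_bound: "onorm (\<lambda>w. blinfun_apply (D (x + z) - D (x - z)) w) \<le> 2 * M * norm y" if "z \<in> S" for z
  proof -
    have "onorm (\<lambda>w. blinfun_apply (D (x + z) - D (x - z)) w) \<le> M * norm ((x + z) - (x - z))"
      unfolding norm_blinfun.rep_eq[symmetric] by (rule lipschitz[OF in_ball[OF that]])
    also have "norm ((x + z) - (x - z)) = 2 * norm z" by (simp add: scaleR_2[symmetric] del: scaleR_2)
    also have "M * (2 * norm z) \<le> M * (2 * norm y)" using that \<open>0 \<le> M\<close> unfolding S_def by (intro mult_left_mono) auto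
    finally show ?thesis by simp
  qed
  have "norm (g y - g 0) \<le> (2 * M * norm y) * norm (y - 0)"
    by (rule differentiable_bound[OF _ g_deriv g'_bound]) (auto simp: S_def)
  moreover have "delta \<phi> x y = - (g y - g 0)" unfolding delta_def g_def by simp
  ultimately show ?thesis by (simp add: power2_eq_square mult_ac)
qed

lemma delta_quadratic_of_local:
  fixes v :: "real^'n \<Rightarrow> real"
  assumes "0 < e" and bounded: "\<And>y. \<bar>v y\<bar> \<le> B"
    and local: "\<And>y. norm y \<le> e \<Longrightarrow> \<bar>delta v x y\<bar> \<le> M * (norm y)\<^sup>2"
  shows "\<exists>K. \<forall>y. \<bar>delta v x y\<bar> \<le> K * (norm y)\<^sup>2"
proof -
  define K where "K = max M (4 * B / e\<^sup>2)"
  have "\<bar>delta v x y\<bar> \<le> K * (norm y)\<^sup>2" for y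
  proof (cases "norm y \<le> e")
    case True
    have "M * (norm y)\<^sup>2 \<le> K * (norm y)\<^sup>2" unfolding K_def by (intro mult_right_mono) auto
    then show ?thesis using local[OF True] by linarith
  next
    case False
    have "\<bar>delta v x y\<bar> \<le> 4 * B"
      using bounded[of x] bounded[of "x - y"] bounded[of "x + y"] unfolding delta_def by linarith
    also have "4 * B = (4 * B / e\<^sup>2) * e\<^sup>2" using \<open>0 < e\<close> by simp
    also have "\<dots> \<le> (4 * B / e\<^sup>2) * (norm y)\<^sup>2"
      using False \<open>0 < e\<close> bounded[of x] by (intro mult_left_mono power_mono) auto
    also have "\<dots> \<le> K * (norm y)\<^sup>2" unfolding K_def by (intro mult_right_mono) auto
    finally show ?thesis .
  qed
  then show ?thesis by blast
qed

lemma C2_on_continuous_on: "C2_on T \<phi> \<Longrightarrow> continuous_on T \<phi>"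
  unfolding C2_on_def by (auto intro: has_derivative_continuous_on)

lemma touch_measurable:
  assumes "test_data \<Omega> x U \<phi>" "u \<in> borel_measurable borel"
  shows "touch U \<phi> u \<in> borel_measurable borel"
proof -
  have U: "open U" and C2: "C2_on (closure U) \<phi>" using assms(1) unfolding test_data_def by auto
  have "touch U \<phi> u = (\<lambda>y. indicator U y *\<^sub>R \<phi> y + (1 - indicator U y) * u y)"
    unfolding touch_def by (auto simp: indicator_def)
  moreover have "(\<lambda>y. indicator U y *\<^sub>R \<phi> y) \<in> borel_measurable borel"
    using U continuous_on_subset[OF C2_on_continuous_on[OF C2] closure_subset]
    by (intro borel_measurable_continuous_on_indicator) auto
  moreover have "U \<in> sets borel" using U by simp
  ultimately show ?thesis using assms(2) by simp
qed

lemma touch_bounded: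
  assumes "test_data \<Omega> x U \<phi>" "bounded (range u)"
  obtains B where "\<And>y. \<bar>touch U \<phi> u y\<bar> \<le> B"
proof -
  have "bounded U" and C2: "C2_on (closure U) \<phi>" using assms(1) unfolding test_data_def by auto
  then have "compact (\<phi> ` closure U)"
    using C2_on_continuous_on[OF C2] by (intro compact_continuous_image) (simp_all add: compact_closure)
  then have "bounded (\<phi> ` closure U)" by (rule compact_imp_bounded)
  then obtain B2 where "\<forall>z \<in> \<phi> ` closure U. norm z \<le> B2" unfolding bounded_iff by blast
  then have B2: "\<And>y. y \<in> closure U \<Longrightarrow> \<bar>\<phi> y\<bar> \<le> B2" by simp
  obtain B1 where B1: "\<And>y. \<bar>u y\<bar> \<le> B1" using assms(2) unfolding bounded_iff by auto
  have "\<bar>touch U \<phi> u y\<bar> \<le> max B1 B2" for y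
    using B1[of y] B2[of y] closure_subset[of U] unfolding touch_def by (auto split: if_splits)
  then show ?thesis using that by blast
qed

lemma touch_delta_quadratic:
  assumes td: "test_data \<Omega> x U \<phi>" and bounded: "\<And>y. \<bar>touch U \<phi> u y\<bar> \<le> B"
  shows "\<exists>K. \<forall>y. \<bar>delta (touch U \<phi> u) x y\<bar> \<le> K * (norm y)\<^sup>2"
proof -
  have U: "open U" "x \<in> U" and C2: "C2_on (closure U) \<phi>" using td unfolding test_data_def by auto
  obtain e where e: "0 < e" "cball x e \<subseteq> U" using open_contains_cball U by blast
  then have "cball x e \<subseteq> interior (closure U)"
    using interior_maximal[OF _ U(1), of "closure U"] closure_subset by blast
  then obtain M D where "0 \<le> M" and D: "\<And>p. p \<in> cball x e \<Longrightarrow> (\<phi> has_derivative blinfun_apply (D p)) (at p)"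
    and lipschitz: "\<And>p q. p \<in> cball x e \<Longrightarrow> q \<in> cball x e \<Longrightarrow> norm (D p - D q) \<le> M * norm (p - q)"
    by (rule C2_on_derivative_lipschitz[OF C2]) iprover
  have "\<bar>delta (touch U \<phi> u) x y\<bar> \<le> 2 * M * (norm y)\<^sup>2" if "norm y \<le> e" for y
  proof -
    have "x + y \<in> U" "x - y \<in> U" using that e by (auto simp: dist_norm subset_iff)
    then have "delta (touch U \<phi> u) x y = delta \<phi> x y" unfolding delta_def touch_def using U by simp
    then show ?thesis using delta_quadratic_of_lipschitz_derivative[OF D lipschitz \<open>0 \<le> M\<close> that] by simp
  qed
  then show ?thesis using delta_quadratic_of_local[of e "touch U \<phi> u" B x "2 * M"] e(1) bounded by blast
qed

text \<open>Since \<open>r\<^sup>2 = o(r\<^sup>2\<^sup>s)\<close>, the one-sided \<open>O(r\<^sup>2)\<close> condition only sees the sign of the leading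
  coefficient \<open>L\<close>.\<close>

lemma mean_value_above_iff_nonneg:
  fixes Mo :: "real \<Rightarrow> real"
  assumes c: "0 < c" and s: "0 < s" "s < 1"
    and expansion: "\<And>r. 0 < r \<Longrightarrow> \<bar>vx - Mo r - c * r powr (2 * s) * L\<bar> \<le> E * r\<^sup>2"
  shows "(\<exists>C. eventually (\<lambda>r. vx \<ge> Mo r - C * r\<^sup>2) (at_right 0)) \<longleftrightarrow> L \<ge> 0"
proof
  assume "\<exists>C. eventually (\<lambda>r. vx \<ge> Mo r - C * r\<^sup>2) (at_right 0)"
  then obtain C where C: "eventually (\<lambda>r. vx \<ge> Mo r - C * r\<^sup>2) (at_right 0)" by blast
  have "eventually (\<lambda>r. 0 \<le> c * L + (E + C) * r powr (2 - 2 * s)) (at_right 0)"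
    using C eventually_at_right_less[of "0::real"]
  proof eventually_elim
    case (elim r)
    have "0 \<le> c * r powr (2 * s) * L + (E + C) * r\<^sup>2"
      using expansion[OF elim(2)] elim(1) by (simp add: algebra_simps abs_le_iff)
    also have "r\<^sup>2 = r powr (2 * s) * r powr (2 - 2 * s)"
      using elim(2) by (simp add: powr_add[symmetric] powr_realpow)
    finally have "0 \<le> r powr (2 * s) * (c * L + (E + C) * r powr (2 - 2 * s))"
      by (simp add: algebra_simps)
    then show ?case using elim(2) by (simp add: zero_le_mult_iff)
  qed
  moreover have "((\<lambda>r. c * L + (E + C) * r powr (2 - 2 * s)) \<longlongrightarrow> c * L) (at_right 0)"
    using s by real_asymp
  ultimately have "0 \<le> c * L" by (intro tendsto_lowerbound) auto
  then show "L \<ge> 0" using c by (simp add: zero_le_mult_iff)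
next
  assume "L \<ge> 0"
  have "eventually (\<lambda>r. vx \<ge> Mo r - E * r\<^sup>2) (at_right 0)"
    using eventually_at_right_less[of "0::real"]
  proof eventually_elim
    case (elim r)
    have "0 \<le> c * r powr (2 * s) * L" using c \<open>L \<ge> 0\<close> by simp
    then show ?case using expansion[OF elim] by (simp add: abs_le_iff)
  qed
  then show "\<exists>C. eventually (\<lambda>r. vx \<ge> Mo r - C * r\<^sup>2) (at_right 0)" by blast
qed

lemma mean_value_below_iff_nonpos:
  fixes Mo :: "real \<Rightarrow> real"
  assumes "0 < c" "0 < s" "s < 1"
    and expansion: "\<And>r. 0 < r \<Longrightarrow> \<bar>vx - Mo r - c * r powr (2 * s) * L\<bar> \<le> E * r\<^sup>2"
  shows "(\<exists>C. eventually (\<lambda>r. vx \<le> Mo r + C * r\<^sup>2) (at_right 0)) \<longleftrightarrow> L \<le> 0"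
proof -
  have "\<bar>- vx - (- Mo r) - c * r powr (2 * s) * (- L)\<bar> \<le> E * r\<^sup>2" if "0 < r" for r
    using expansion[OF that] by (simp add: abs_minus_commute algebra_simps)
  from mean_value_above_iff_nonneg[OF assms(1-3) this]
  have "(\<exists>C. eventually (\<lambda>r. - vx \<ge> - Mo r - C * r\<^sup>2) (at_right 0)) \<longleftrightarrow> L \<le> 0" by simp
  moreover have "(- vx \<ge> - Mo r - C * r\<^sup>2) \<longleftrightarrow> (vx \<le> Mo r + C * r\<^sup>2)" for r C by linarith
  ultimately show ?thesis by simp
qed

lemma touch_mean_value_iff:
  fixes u \<phi> :: "real^'n \<Rightarrow> real"
  assumes s: "0 < s" "s < 1" and a: "spectral_measure a"
    and td: "test_data \<Omega> x U \<phi>" and u: "Linfty u"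
  shows "(\<exists>C. eventually (\<lambda>r. touch U \<phi> u x \<ge> Mop a s r (touch U \<phi> u) x - C * r\<^sup>2) (at_right 0))
           \<longleftrightarrow> Lop a s (touch U \<phi> u) x \<ge> 0"
    "(\<exists>C. eventually (\<lambda>r. touch U \<phi> u x \<le> Mop a s r (touch U \<phi> u) x + C * r\<^sup>2) (at_right 0))
           \<longleftrightarrow> Lop a s (touch U \<phi> u) x \<le> 0"
proof -
  let ?v = "touch U \<phi> u"
  have meas: "?v \<in> borel_measurable borel"
    using touch_measurable[OF td] u unfolding Linfty_def by blast
  obtain B where B: "\<And>y. \<bar>?v y\<bar> \<le> B"
    using touch_bounded[OF td] u unfolding Linfty_def by blast
  obtain K where K: "\<And>y. \<bar>delta ?v x y\<bar> \<le> K * (norm y)\<^sup>2"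
    using touch_delta_quadratic[OF td B] by blast
  note expansion = mean_value_expansion[OF _ s a meas B K]
  show "(\<exists>C. eventually (\<lambda>r. ?v x \<ge> Mop a s r ?v x - C * r\<^sup>2) (at_right 0)) \<longleftrightarrow> Lop a s ?v x \<ge> 0"
    by (rule mean_value_above_iff_nonneg[OF cnst_pos[OF s a] s expansion])
  show "(\<exists>C. eventually (\<lambda>r. ?v x \<le> Mop a s r ?v x + C * r\<^sup>2) (at_right 0)) \<longleftrightarrow> Lop a s ?v x \<le> 0"
    by (rule mean_value_below_iff_nonpos[OF cnst_pos[OF s a] s expansion])
qed

lemma continuous_on_imp_lsc_usc:
  assumes "continuous_on S (u :: 'a::topological_space \<Rightarrow> real)"
  shows "lsc_on S u" "usc_on S u"
proof -
  have "(u \<longlongrightarrow> u y) (at y within S)" if "y \<in> S" for y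
    using assms that unfolding continuous_on_def by blast
  then show "lsc_on S u" "usc_on S u"
    unfolding lsc_on_def usc_on_def using order_tendstoD by blast+
qed

theorem theorem1p1:
  fixes a :: "(real^'n) measure" and s :: real and \<Omega> :: "(real^'n) set" and u :: "real^'n \<Rightarrow> real"
  assumes "0 < s" and "s < 1"
    and "spectral_measure a"
    and "open \<Omega>"
    and "Linfty u"
    and "continuous_on (closure \<Omega>) u"
  shows "(\<forall>x\<in>\<Omega>. mv_viscosity a s \<Omega> u x) \<longleftrightarrow> visc_solution a s \<Omega> u"
  using continuous_on_imp_lsc_usc[OF assms(6)] assms(5,6) touch_mean_value_iff[OF assms(1-3) _ assms(5)]
  unfolding mv_viscosity_def mv_above_def mv_below_def visc_solution_def visc_super_def visc_sub_def
  by blast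

end
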